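(* Let $w$ be a function on pairs $(T,S)$ of equal-size subsets of $[n]$ with values in $\mathbb{R}\cup\{-\infty\}$ satisfying properties (i)–(v) below, such that $F(S)=w(\{1,\dots,|S|\},S)$ is submodular. Let $I\subseteq[n]$ be an interval and $S\subseteq[n]$ with $|S|=|I|$. Then for any $t\in[n]$ with $t>\max(I)$ and $(I\setminus\{\max(I)\})\cup\{t\}\preceq S$, \[ w(I,S)\;\ge\; w((I\setminus\{\max(I)\})\cup\{t\},S). \]
   Context: Notation: $w(i,j)=w(\{i\},\{j\})$; $Ss=S\cup\{s\}$; an interval is a set of consecutive integers. For $S,T\in\binom{[n]}{k}$, $T=\{t_1<\dots<t_k\}$, $S\preceq T$ means $|\{s\in S:s\le t_j\}|\ge j$ for all $j$; $S\prec T$ means $S\preceq T$, $S\ne T$. Properties: (i) $w(\{1,\dots,|S|\},S)\ne-\infty$ for all $S$. (ii) $w(T,S)=-\infty$ whenever $S\prec T$. (iii) For any interval $I$ with $\max(I)<\min(T\cup S)$, $w(I\cup T,I\cup S)=\sum_{i\in I}w(i,i)+w(T,S)$. (iv) If $t,s>\max(S\cup T)$ then $w(Tt,Ss)=w(T,S)+w(t,s)$. (v) For fixed $S$, $|S|=k$, and any $R$ with $|R|=k-2$ and distinct $a,b,c,d\notin R$, the maximum of $w(R\cup\{a,b\},S)+w(R\cup\{c,d\},S)$, $w(R\cup\{a,c\},S)+w(R\cup\{b,d\},S)$, $w(R\cup\{a,d\},S)+w(R\cup\{b,c\},S)$ is attained at least twice. Submodular: $F(A\cap B)+F(A\cup B)\le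 F(A)+F(B)$. *)

theory Defs
  imports "HOL-Library.Extended_Real"
begin

definition admissible :: "nat \<Rightarrow> nat set \<Rightarrow> nat set \<Rightarrow> bool" where
  "admissible n T S \<longleftrightarrow> T \<subseteq> {1..n} \<and> S \<subseteq> {1..n} \<and> card T = card S"

definition is_interval :: "nat set \<Rightarrow> bool" where
  "is_interval I \<longleftrightarrow> (\<exists>a b. I = {a..b})"

definition preceq :: "nat set \<Rightarrow> nat set \<Rightarrow> bool" where
  "preceq S T \<longleftrightarrow> card S = card T \<and>
     (\<forall>j < card T. Suc j \<le> card {s \<in> S. s \<le> sorted_list_of_set T ! j})"

definition prec :: "nat set \<Rightarrow> nat set \<Rightarrow> bool" where
  "prec S T \<longleftrightarrow> preceq S T \<and> S \<noteq> T"

definition max_twice :: "ereal \<Rightarrow> ereal \<Rightarrow> ereal \<Rightarrow> bool" where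
  "max_twice x y z \<longleftrightarrow> (let m = max x (max y z) in
     (x = m \<and> y = m) \<or> (x = m \<and> z = m) \<or> (y = m \<and> z = m))"

definition submodular_on :: "'a set \<Rightarrow> ('a set \<Rightarrow> ereal) \<Rightarrow> bool" where
  "submodular_on X F \<longleftrightarrow> (\<forall>A B. A \<subseteq> X \<longrightarrow> B \<subseteq> X \<longrightarrow>
      F (A \<inter> B) + F (A \<union> B) \<le> F A + F B)"

text \<open>Properties (i)-(v) of w, with values in \<real> \<union> {-\<infinity>}.\<close>
definition good_w :: "nat \<Rightarrow> (nat set \<Rightarrow> nat set \<Rightarrow> ereal) \<Rightarrow> bool" where
  "good_w n w \<longleftrightarrow>
    (\<forall>T S. admissible n T S \<longrightarrow> w T S \<noteq> \<infinity>) \<and>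
    \<comment> \<open>(i)\<close>
    (\<forall>S. S \<subseteq> {1..n} \<longrightarrow> w {1..card S} S \<noteq> -\<infinity>) \<and>
    \<comment> \<open>(ii)\<close>
    (\<forall>T S. admissible n T S \<longrightarrow> prec S T \<longrightarrow> w T S = -\<infinity>) \<and>
    \<comment> \<open>(iii)\<close>
    (\<forall>I T S. admissible n T S \<longrightarrow> is_interval I \<longrightarrow> I \<subseteq> {1..n} \<longrightarrow>
       (\<forall>i\<in>I. \<forall>x\<in>T \<union> S. i < x) \<longrightarrow>
       w (I \<union> T) (I \<union> S) = (\<Sum>i\<in>I. w {i} {i}) + w T S) \<and>
    \<comment> \<open>(iv)\<close>
    (\<forall>T S t s. admissible n T S \<longrightarrow> t \<in> {1..n} \<longrightarrow> s \<in> {1..n} \<longrightarrow>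
       (\<forall>x\<in>S \<union> T. x < t \<and> x < s) \<longrightarrow>
       w (insert t T) (insert s S) = w T S + w {t} {s}) \<and>
    \<comment> \<open>(v)\<close>
    (\<forall>S R a b c d. S \<subseteq> {1..n} \<longrightarrow> R \<subseteq> {1..n} \<longrightarrow> card R + 2 = card S \<longrightarrow>
       a \<in> {1..n} \<longrightarrow> b \<in> {1..n} \<longrightarrow> c \<in> {1..n} \<longrightarrow> d \<in> {1..n} \<longrightarrow>
       distinct [a, b, c, d] \<longrightarrow> a \<notin> R \<longrightarrow> b \<notin> R \<longrightarrow> c \<notin> R \<longrightarrow> d \<notin> R \<longrightarrow>
       max_twice (w (R \<union> {a, b}) S + w (R \<union> {c, d}) S)
                 (w (R \<union> {a, c}) S + w (R \<union> {b, d}) S)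
                 (w (R \<union> {a, d}) S + w (R \<union> {b, c}) S))"

end

theory Submission
  imports Defs
begin

(* For I = [a,b] and L = [a,b) + {t}, the inequality w(L,S) <= w(I,S) is proved by induction,
   lexicographically on (b - a, t - b).  By (iii), F(X) = w([1,|X|], X) splits as
   sum_{i<c} w(i,i) + w([c+1, c+|Y|], Y) whenever X = [1,c] + Y with Y above c, so submodularity
   of F turns into exchange inequalities between values of w; all diagonal terms are finite,
   which lets them be cancelled in the extended reals.  Let d = max S and S' = S - {d}.
   If S' lies below t, (iv) splits off the pair (t,d) and submodularity for [1,t) and [1,a) + S
   finishes.  If a is in S, (iii) strips a from both sides and the induction hypothesis applies.
   Otherwise the four-point condition (v) for a, b, t, d over R = (a,b) compares three sums;
   the induction hypothesis for (a+1, b, S'), for (a+1, b+1, S) and submodularity for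
   [1,a] + S' and [1,a) + S show that if w(L,S) > w(I,S), the middle sum would be the unique
   maximum. *)

lemma preceq_lower_bound:
  fixes c :: nat
  assumes "preceq T S" and "finite S" and "\<forall>x\<in>T. c \<le> x" and "s \<in> S"
  shows "c \<le> s"
proof -
  have "S \<noteq> {}" and "0 < card S"
    using assms(2,4) card_gt_0_iff by auto
  then have "sorted_list_of_set S ! 0 = Min S"
    using assms(2) by (simp add: sorted_list_of_set_nonempty)
  then have "1 \<le> card {x \<in> T. x \<le> Min S}"
    using assms(1) \<open>0 < card S\<close> by (force simp: preceq_def)
  then obtain x where "x \<in> T" "x \<le> Min S"
    by (metis (no_types, lifting) Collect_empty_eq card.empty not_one_le_zero)
  moreover have "Min S \<le> s"
    using Min_le[OF assms(2,4)] .
  ultimately show ?thesis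
    using assms(3) by (meson order_trans)
qed

lemma preceq_upper_witness:
  fixes x :: nat
  assumes "preceq T S" and "finite T" and "x \<in> T"
  shows "\<exists>s\<in>S. x \<le> s"
proof -
  define xs where "xs = sorted_list_of_set S"
  define k where "k = card S - 1"
  have "card T = card S"
    using assms(1) by (simp add: preceq_def)
  moreover have "0 < card T"
    using assms(2,3) card_gt_0_iff by blast
  ultimately have "finite S" "k < card S"
    using card_gt_0_iff[of S] by (auto simp: k_def)
  then have "k < length xs" "set xs = S"
    by (simp_all add: xs_def)
  then have "xs ! k \<in> S"
    using nth_mem by blast
  have "Suc k \<le> card {y \<in> T. y \<le> xs ! k}"
    using assms(1) \<open>k < card S\<close> unfolding preceq_def xs_def by blast
  then have "card T \<le> card {y \<in> T. y \<le> xs ! k}"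
    using \<open>k < card S\<close> \<open>card T = card S\<close> by (simp add: k_def)
  then have "{y \<in> T. y \<le> xs ! k} = T"
    using assms(2) by (intro card_seteq) auto
  then show ?thesis
    using assms(3) \<open>xs ! k \<in> S\<close> by blast
qed

lemma finite_Max_split:
  fixes S :: "nat set"
  assumes "finite S" and "S \<subseteq> {a..n}" and "s \<in> S"
  obtains d S' where "S = insert d S'" "d \<notin> S'" "s \<le> d" "d \<le> n" "S' \<subseteq> {a..<d}"
proof
  have "Max S \<in> S"
    using Max_in[OF assms(1)] assms(3) by blast
  then show "S = insert (Max S) (S - {Max S})" "Max S \<notin> S - {Max S}" "Max S \<le> n"
    using assms(2) by auto
  show "s \<le> Max S"
    using Max_ge[OF assms(1,3)] .
  show "S - {Max S} \<subseteq> {a..<Max S}"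
    using Max_ge[OF assms(1)] assms(2) by fastforce
qed

lemma subset_atLeastAtMost_Suc_if_notin:
  fixes a n :: nat
  shows "a \<notin> S \<Longrightarrow> S \<subseteq> {a..n} \<Longrightarrow> S \<subseteq> {Suc a..n}"
  by (auto simp: subset_iff Suc_le_eq order.strict_iff_order)

locale good_weight =
  fixes n :: nat and w :: "nat set \<Rightarrow> nat set \<Rightarrow> ereal"
  assumes good_w: "good_w n w"
begin

lemma weight_not_infinity: "admissible n T S \<Longrightarrow> w T S \<noteq> \<infinity>"
  using good_w by (simp add: good_w_def)

lemma weight_interval_prefix:
  "\<lbrakk>admissible n T S; is_interval I; I \<subseteq> {1..n}; \<forall>i\<in>I. \<forall>x\<in>T \<union> S. i < x\<rbrakk>
    \<Longrightarrow> w (I \<union> T) (I \<union> S) = (\<Sum>i\<in>I. w {i} {i}) + w T S"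
  using good_w by (simp add: good_w_def)

lemma weight_insert_above:
  "\<lbrakk>admissible n T S; t \<in> {1..n}; s \<in> {1..n}; \<forall>x\<in>S \<union> T. x < t \<and> x < s\<rbrakk>
    \<Longrightarrow> w (insert t T) (insert s S) = w T S + w {t} {s}"
  using good_w by (simp add: good_w_def)

lemma weight_four_point:
  "\<lbrakk>S \<subseteq> {1..n}; R \<subseteq> {1..n}; card R + 2 = card S;
    a \<in> {1..n}; b \<in> {1..n}; c \<in> {1..n}; d \<in> {1..n};
    distinct [a, b, c, d]; a \<notin> R; b \<notin> R; c \<notin> R; d \<notin> R\<rbrakk>
    \<Longrightarrow> max_twice (w (R \<union> {a, b}) S + w (R \<union> {c, d}) S)
                  (w (R \<union> {a, c}) S + w (R \<union> {b, d}) S)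
                  (w (R \<union> {a, d}) S + w (R \<union> {b, c}) S)"
  using good_w by (simp add: good_w_def)

definition initial_weight :: "nat set \<Rightarrow> ereal" where
  "initial_weight X = w {1..card X} X"

lemma initial_weight_not_minf: "X \<subseteq> {1..n} \<Longrightarrow> initial_weight X \<noteq> -\<infinity>"
  using good_w by (simp add: good_w_def initial_weight_def)

lemma diagonal_weight_finite:
  assumes "i \<in> {1..n}"
  shows "\<bar>w {i} {i}\<bar> \<noteq> \<infinity>"
proof -
  have "insert i {1..<i} = {1..i}"
    using assms by auto
  moreover have "w (insert i {1..<i}) (insert i {1..<i}) = w {1..<i} {1..<i} + w {i} {i}"
    using assms by (intro weight_insert_above) (auto simp: admissible_def)
  moreover have "w {1..i} {1..i} \<noteq> -\<infinity>"
    using initial_weight_not_minf[of "{1..i}"] assms by (simp add: initial_weight_def)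
  moreover have "w {1..<i} {1..<i} \<noteq> \<infinity>" "w {i} {i} \<noteq> \<infinity>"
    using assms by (auto intro!: weight_not_infinity simp: admissible_def)
  ultimately show ?thesis by auto
qed

definition diagonal_sum :: "nat \<Rightarrow> ereal" where
  "diagonal_sum a = (\<Sum>i\<in>{1..<a}. w {i} {i})"

lemma diagonal_sum_finite: "a \<le> Suc n \<Longrightarrow> \<bar>diagonal_sum a\<bar> \<noteq> \<infinity>"
proof (induction a)
  case (Suc a)
  then show ?case
    using diagonal_weight_finite[of a] by (cases "a = 0") (auto simp: diagonal_sum_def)
qed (simp add: diagonal_sum_def)

lemma weight_empty:
  assumes "1 \<le> n"
  shows "w {} {} = 0"
proof -
  have "is_interval {1}"
    unfolding is_interval_def by (metis atLeastAtMost_singleton)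
  then have "w {1} {1} + 0 = w {1} {1} + w {} {}"
    using weight_interval_prefix[of "{}" "{}" "{1}"] assms by (simp add: admissible_def)
  moreover have "\<bar>w {1} {1}\<bar> \<noteq> \<infinity>"
    using diagonal_weight_finite[of 1] assms by simp
  ultimately show ?thesis
    using ereal_add_cancel_left[of "w {1} {1}" 0 "w {} {}"] by auto
qed

lemma initial_weight_split:
  assumes "1 \<le> a" and "a \<le> Suc n" and "X \<subseteq> {a..n}" and "a + card X = c"
  shows "initial_weight ({1..<a} \<union> X) = diagonal_sum a + w {a..<c} X"
proof -
  have "finite X"
    using assms(3) finite_subset by blast
  have "card X \<le> Suc n - a"
    using card_mono[OF _ assms(3)] by simp
  have "{1..<a} \<inter> X = {}"
    using assms(3) by auto
  then have "card ({1..<a} \<union> X) = c - 1"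
    using \<open>finite X\<close> assms(1,4) by (simp add: card_Un_disjoint)
  moreover have "{1..c - 1} = {1..<a} \<union> {a..<c}"
    using assms(1,4) by auto
  moreover have "w ({1..<a} \<union> {a..<c}) ({1..<a} \<union> X) = diagonal_sum a + w {a..<c} X"
    unfolding diagonal_sum_def
  proof (rule weight_interval_prefix)
    show "admissible n {a..<c} X"
      using assms \<open>card X \<le> Suc n - a\<close> by (auto simp: admissible_def)
    have "{1..<a} = {1..a - 1}"
      using assms(1) by auto
    then show "is_interval {1..<a}"
      unfolding is_interval_def by blast
    show "\<forall>i\<in>{1..<a}. \<forall>x\<in>{a..<c} \<union> X. i < x"
      using assms(3) by fastforce
  qed (use assms(2) in auto)
  ultimately show ?thesis
    by (simp add: initial_weight_def)
qed

lemma interval_weight_finite: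
  assumes "1 \<le> a" and "a \<le> Suc n" and "X \<subseteq> {a..n}" and "a + card X = c"
  shows "\<bar>w {a..<c} X\<bar> \<noteq> \<infinity>"
proof -
  have "card X \<le> Suc n - a"
    using card_mono[OF _ assms(3)] by simp
  then have "w {a..<c} X \<noteq> \<infinity>"
    using assms by (intro weight_not_infinity) (auto simp: admissible_def)
  moreover have "{1..<a} \<union> X \<subseteq> {1..n}"
    using assms(1-3) by auto
  then have "initial_weight ({1..<a} \<union> X) \<noteq> -\<infinity>"
    by (rule initial_weight_not_minf)
  then have "diagonal_sum a + w {a..<c} X \<noteq> -\<infinity>"
    unfolding initial_weight_split[OF assms] .
  then have "w {a..<c} X \<noteq> -\<infinity>"
    using diagonal_sum_finite[OF assms(2)] by auto
  ultimately show ?thesis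
    by auto
qed

end

lemma ereal_add_cancel_finite_le:
  fixes p q x y z u :: ereal
  assumes "(p + x) + (q + y) \<le> (q + z) + (p + u)" and "\<bar>p\<bar> \<noteq> \<infinity>" and "\<bar>q\<bar> \<noteq> \<infinity>"
  shows "x + y \<le> z + u"
proof -
  have "(x + y) + (p + q) \<le> (z + u) + (p + q)"
    using assms(1) by (simp add: ac_simps)
  moreover have "p + q \<noteq> \<infinity>" and "p + q \<noteq> -\<infinity>"
    using assms(2,3) by auto
  ultimately show ?thesis
    using ereal_add_le_add_iff2[of "x + y" "p + q" "z + u"] by blast
qed

lemma max_twice_bound:
  fixes x z p q c :: ereal
  assumes "max_twice x (q + c) z" and "x \<le> p + c" and "z \<le> p + c" and "\<bar>c\<bar> \<noteq> \<infinity>"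
  shows "q \<le> p"
proof (rule ccontr)
  assume "\<not> q \<le> p"
  then have "p + c < q + c"
    using ereal_less_add[OF assms(4), of p q] by (simp add: add.commute)
  then have "x < q + c" and "z < q + c"
    using assms(2,3) by auto
  then show False
    using assms(1) by (auto simp: max_twice_def Let_def max_def split: if_splits)
qed

locale submodular_weight = good_weight +
  assumes submodular: "submodular_on {1..n} (\<lambda>S. w {1..card S} S)"
begin

lemma initial_weight_submodular:
  "A \<subseteq> {1..n} \<Longrightarrow> B \<subseteq> {1..n}
    \<Longrightarrow> initial_weight (A \<inter> B) + initial_weight (A \<union> B) \<le> initial_weight A + initial_weight B"
  using submodular by (simp add: submodular_on_def initial_weight_def)

lemma exchange_top:
  assumes "1 \<le> a" "a \<le> b" "b < t" "t \<le> d" "d \<le> n" "S' \<subseteq> {a..<t}" "card S' = b - a"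
  shows "w {a..<b} S' + w {t} {d} \<le> w {a..b} (insert d S')"
proof -
  have "finite S'" "d \<notin> S'" "S' \<subseteq> {a..n}" "insert d S' \<subseteq> {a..n}" "a \<le> Suc n" "t \<le> Suc n"
    using assms(2-6) finite_subset by auto
  then have "a + card (insert d S') = Suc b"
    using assms(2,7) by simp
  define A where "A = {1..<t}"
  define B where "B = {1..<a} \<union> insert d S'"
  have "A \<inter> B = {1..<a} \<union> S'" "A \<union> B = {1..<t} \<union> {d}"
    using assms by (auto simp: A_def B_def)
  have "A \<subseteq> {1..n}" "B \<subseteq> {1..n}"
    using assms by (auto simp: A_def B_def)
  then have "initial_weight (A \<inter> B) + initial_weight (A \<union> B) \<le> initial_weight A + initial_weight B"
    by (rule initial_weight_submodular)
  moreover have "initial_weight (A \<inter> B) = diagonal_sum a + w {a..<b} S'"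
    using initial_weight_split[of a S' b] \<open>A \<inter> B = {1..<a} \<union> S'\<close> \<open>a \<le> Suc n\<close> \<open>S' \<subseteq> {a..n}\<close> assms(1,2,7)
    by simp
  moreover have "initial_weight (A \<union> B) = diagonal_sum t + w {t} {d}"
    using initial_weight_split[of t "{d}" "Suc t"] \<open>A \<union> B = {1..<t} \<union> {d}\<close> \<open>t \<le> Suc n\<close> assms
    by (simp add: atLeastLessThanSuc_atLeastAtMost)
  moreover have "initial_weight A = diagonal_sum t + 0"
    using initial_weight_split[of t "{}" t] weight_empty assms by (simp add: A_def)
  moreover have "initial_weight B = diagonal_sum a + w {a..b} (insert d S')"
    using initial_weight_split[of a "insert d S'" "Suc b"] \<open>a + card (insert d S') = Suc b\<close>
      \<open>a \<le> Suc n\<close> \<open>insert d S' \<subseteq> {a..n}\<close> assms(1)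
    by (simp add: B_def atLeastLessThanSuc_atLeastAtMost)
  ultimately have "(diagonal_sum a + w {a..<b} S') + (diagonal_sum t + w {t} {d})
      \<le> (diagonal_sum t + 0) + (diagonal_sum a + w {a..b} (insert d S'))"
    by (simp only:)
  then have "w {a..<b} S' + w {t} {d} \<le> 0 + w {a..b} (insert d S')"
    by (rule ereal_add_cancel_finite_le) (use \<open>a \<le> Suc n\<close> \<open>t \<le> Suc n\<close> diagonal_sum_finite in auto)
  then show ?thesis
    by simp
qed

lemma exchange_shift:
  assumes "1 \<le> a" "a \<le> b" "S \<subseteq> {Suc a..n}" "S' \<subseteq> S" "card S = Suc b - a" "card S' = b - a"
  shows "w {a..<b} S' + w {Suc a..Suc b} S \<le> w {Suc a..b} S' + w {a..b} S"
proof -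
  have "S \<noteq> {}"
    using assms(2,5) by auto
  then have "a < n"
    using assms(3) by fastforce
  define A where "A = {1..<Suc a} \<union> S'"
  define B where "B = {1..<a} \<union> S"
  have "A \<inter> B = {1..<a} \<union> S'" "A \<union> B = {1..<Suc a} \<union> S"
    using assms(3,4) by (auto simp: A_def B_def)
  have "S' \<subseteq> {a..n}" "S \<subseteq> {a..n}"
    using assms(3,4) by auto
  have "A \<subseteq> {1..n}" "B \<subseteq> {1..n}"
    using assms(3,4) \<open>a < n\<close> by (auto simp: A_def B_def)
  then have "initial_weight (A \<inter> B) + initial_weight (A \<union> B) \<le> initial_weight A + initial_weight B"
    by (rule initial_weight_submodular)
  moreover have "initial_weight (A \<inter> B) = diagonal_sum a + w {a..<b} S'"
    using initial_weight_split[of a S' b] \<open>A \<inter> B = {1..<a} \<union> S'\<close> \<open>S' \<subseteq> {a..n}\<close> \<open>a < n\<close> assms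
    by auto
  moreover have "initial_weight (A \<union> B) = diagonal_sum (Suc a) + w {Suc a..Suc b} S"
    using initial_weight_split[of "Suc a" S "Suc (Suc b)"] \<open>A \<union> B = {1..<Suc a} \<union> S\<close> \<open>a < n\<close> assms
    by (simp add: atLeastLessThanSuc_atLeastAtMost)
  moreover have "initial_weight A = diagonal_sum (Suc a) + w {Suc a..b} S'"
    using initial_weight_split[of "Suc a" S' "Suc b"] \<open>a < n\<close> assms
    by (auto simp: A_def atLeastLessThanSuc_atLeastAtMost)
  moreover have "initial_weight B = diagonal_sum a + w {a..b} S"
    using initial_weight_split[of a S "Suc b"] \<open>S \<subseteq> {a..n}\<close> \<open>a < n\<close> assms
    by (auto simp: B_def atLeastLessThanSuc_atLeastAtMost)
  ultimately have "(diagonal_sum a + w {a..<b} S') + (diagonal_sum (Suc a) + w {Suc a..Suc b} S)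
      \<le> (diagonal_sum (Suc a) + w {Suc a..b} S') + (diagonal_sum a + w {a..b} S)"
    by (simp only:)
  then show ?thesis
    by (rule ereal_add_cancel_finite_le) (use \<open>a < n\<close> diagonal_sum_finite in auto)
qed

lemma exchange_last_top:
  assumes "1 \<le> a" "a \<le> b" "b < t" "t \<le> d" "d \<le> n" "S' \<subseteq> {a..<t}" "card S' = b - a"
  shows "w (insert t {a..<b}) (insert d S') \<le> w {a..b} (insert d S')"
proof -
  have "w (insert t {a..<b}) (insert d S') = w {a..<b} S' + w {t} {d}"
    using assms by (intro weight_insert_above) (auto simp: admissible_def)
  then show ?thesis
    using exchange_top[OF assms] by simp
qed

lemma exchange_last_strip_min:
  assumes "1 \<le> a" "a < b" "b < t" "t \<le> n" "a \<in> S" "S \<subseteq> {a..n}" "card S = Suc b - a"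
    and "w (insert t {Suc a..<b}) (S - {a}) \<le> w {Suc a..b} (S - {a})"
  shows "w (insert t {a..<b}) S \<le> w {a..b} S"
proof -
  have "S - {a} \<subseteq> {Suc a..n}"
    using assms(6) by (intro subset_atLeastAtMost_Suc_if_notin) auto
  moreover have "finite S"
    using assms(6) finite_subset by blast
  ultimately have "admissible n {Suc a..b} (S - {a})" "admissible n (insert t {Suc a..<b}) (S - {a})"
    using assms(1-5,7) by (auto simp: admissible_def)
  have "is_interval {a}"
    unfolding is_interval_def by (metis atLeastAtMost_singleton)
  have "w ({a} \<union> {Suc a..b}) ({a} \<union> (S - {a})) = (\<Sum>i\<in>{a}. w {i} {i}) + w {Suc a..b} (S - {a})"
    by (rule weight_interval_prefix) (use assms \<open>is_interval {a}\<close> \<open>admissible n {Suc a..b} (S - {a})\<close> in auto)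
  moreover have "w ({a} \<union> insert t {Suc a..<b}) ({a} \<union> (S - {a}))
      = (\<Sum>i\<in>{a}. w {i} {i}) + w (insert t {Suc a..<b}) (S - {a})"
    by (rule weight_interval_prefix)
      (use assms \<open>is_interval {a}\<close> \<open>admissible n (insert t {Suc a..<b}) (S - {a})\<close> in auto)
  moreover have "{a} \<union> {Suc a..b} = {a..b}" "{a} \<union> insert t {Suc a..<b} = insert t {a..<b}"
    "{a} \<union> (S - {a}) = S"
    using assms(2,5) by auto
  ultimately show ?thesis
    using assms(8) by (simp add: add_left_mono)
qed

lemma four_point_exchange:
  assumes "1 \<le> a" "a < b" "b < t" "t < d" "d \<le> n" "S' \<subseteq> {Suc a..<d}" "card S' = b - a"
  shows "max_twice
      (w {a..b} (insert d S') + (w (insert t {Suc a..<b}) S' + w {d} {d}))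
      (w (insert t {a..<b}) (insert d S') + (w {Suc a..b} S' + w {d} {d}))
      ((w {a..<b} S' + w {d} {d}) + w (insert t {Suc a..b}) (insert d S'))"
proof -
  define S where "S = insert d S'"
  define R where "R = {Suc a..<b}"
  have "finite S'" "d \<notin> S'" "S \<subseteq> {1..n}"
    using assms(1-6) finite_subset by (auto simp: S_def)
  then have "card R + 2 = card S"
    using assms(2,7) by (simp add: S_def R_def)
  have remove_d: "w (insert d X) S = w X S' + w {d} {d}" if "X \<subseteq> {1..<d}" "card X = b - a" for X
    unfolding S_def using that assms by (intro weight_insert_above) (auto simp: admissible_def)
  have "max_twice (w (R \<union> {a, b}) S + w (R \<union> {t, d}) S)
                  (w (R \<union> {a, t}) S + w (R \<union> {b, d}) S)
                  (w (R \<union> {a, d}) S + w (R \<union> {b, t}) S)"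
    by (rule weight_four_point) (use assms \<open>S \<subseteq> {1..n}\<close> \<open>card R + 2 = card S\<close> in \<open>auto simp: R_def\<close>)
  moreover have "R \<union> {a, b} = {a..b}" "R \<union> {t, d} = insert d (insert t R)"
    "R \<union> {a, t} = insert t {a..<b}" "R \<union> {b, d} = insert d {Suc a..b}"
    "R \<union> {a, d} = insert d {a..<b}" "R \<union> {b, t} = insert t {Suc a..b}"
    using assms(2) by (auto simp: R_def)
  moreover have "w (insert d (insert t R)) S = w (insert t R) S' + w {d} {d}"
    "w (insert d {Suc a..b}) S = w {Suc a..b} S' + w {d} {d}"
    "w (insert d {a..<b}) S = w {a..<b} S' + w {d} {d}"
    using assms(1-4) by (auto intro!: remove_d simp: R_def)
  ultimately show ?thesis
    unfolding S_def R_def by (simp only:)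
qed

lemma exchange_last_four_point:
  assumes "1 \<le> a" "a < b" "b < t" "t < d" "d \<le> n" "S' \<subseteq> {Suc a..<d}" "card S' = b - a"
    and IH_S': "w (insert t {Suc a..<b}) S' \<le> w {Suc a..b} S'"
    and IH_S: "w (insert t {Suc a..b}) (insert d S') \<le> w {Suc a..Suc b} (insert d S')"
  shows "w (insert t {a..<b}) (insert d S') \<le> w {a..b} (insert d S')"
proof -
  let ?S = "insert d S'"
  have "d \<notin> S'" "finite S'"
    using assms(6) finite_subset by auto
  then have "?S \<subseteq> {Suc a..n}" "card ?S = Suc b - a"
    using assms(2-7) by auto
  have "\<bar>w {Suc a..<Suc b} S'\<bar> \<noteq> \<infinity>"
    using assms(1-7) by (intro interval_weight_finite) auto
  moreover have "\<bar>w {d} {d}\<bar> \<noteq> \<infinity>"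
    using assms by (intro diagonal_weight_finite) auto
  ultimately have finite_c: "\<bar>w {Suc a..b} S' + w {d} {d}\<bar> \<noteq> \<infinity>"
    by (auto simp: atLeastLessThanSuc_atLeastAtMost)
  have first_le: "w {a..b} ?S + (w (insert t {Suc a..<b}) S' + w {d} {d})
      \<le> w {a..b} ?S + (w {Suc a..b} S' + w {d} {d})"
    using IH_S' by (intro add_left_mono add_right_mono)
  have "(w {a..<b} S' + w {d} {d}) + w (insert t {Suc a..b}) ?S
      \<le> (w {a..<b} S' + w {d} {d}) + w {Suc a..Suc b} ?S"
    using IH_S by (rule add_left_mono)
  also have "\<dots> = (w {a..<b} S' + w {Suc a..Suc b} ?S) + w {d} {d}"
    by (simp add: ac_simps)
  also have "\<dots> \<le> (w {Suc a..b} S' + w {a..b} ?S) + w {d} {d}"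
    using exchange_shift[of a b ?S S'] assms(1,2,7) \<open>?S \<subseteq> {Suc a..n}\<close> \<open>card ?S = Suc b - a\<close>
    by (intro add_right_mono) auto
  also have "\<dots> = w {a..b} ?S + (w {Suc a..b} S' + w {d} {d})"
    by (simp add: ac_simps)
  finally have third_le: "(w {a..<b} S' + w {d} {d}) + w (insert t {Suc a..b}) ?S
      \<le> w {a..b} ?S + (w {Suc a..b} S' + w {d} {d})" .
  show ?thesis
    using max_twice_bound[OF four_point_exchange[OF assms(1-7)] first_le third_le finite_c] .
qed

lemma exchange_last:
  assumes "1 \<le> a" "a \<le> b" "b < t" "t \<le> n" "S \<subseteq> {a..n}" "card S = Suc b - a" "\<exists>s\<in>S. t \<le> s"
  shows "w (insert t {a..<b}) S \<le> w {a..b} S"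
  using assms
  \<comment> \<open>lexicographic in \<open>(b - a, t - b)\<close>, since \<open>t - b \<le> n\<close>\<close>
proof (induction "(b - a) * (n + 1) + (t - b)" arbitrary: a b S rule: less_induct)
  case less
  have "finite S"
    using less.prems(5) finite_subset by blast
  obtain s0 where "s0 \<in> S" "t \<le> s0"
    using less.prems(7) by blast
  obtain d S' where S: "S = insert d S'" "d \<notin> S'" "s0 \<le> d" "d \<le> n" "S' \<subseteq> {a..<d}"
    using finite_Max_split[OF \<open>finite S\<close> less.prems(5) \<open>s0 \<in> S\<close>] .
  have "t \<le> d" "finite S'" "card S' = b - a"
    using S \<open>t \<le> s0\<close> \<open>finite S\<close> less.prems(6) by auto
  show ?case
  proof (cases "S' \<subseteq> {a..<t}")
    case True
    then show ?thesis
      using exchange_last_top[of a b t d S'] less.prems(1-3) S \<open>t \<le> d\<close> \<open>card S' = b - a\<close> by simp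
  next
    case False
    then obtain s where "s \<in> S'" "t \<le> s" "t < d"
      using \<open>S' \<subseteq> {a..<d}\<close> by (auto simp: subset_iff)
    then have "a < b"
      using \<open>finite S'\<close> \<open>card S' = b - a\<close> card_gt_0_iff[of S'] by auto
    then have measure_S': "(b - Suc a) * (n + 1) + (t - b) < (b - a) * (n + 1) + (t - b)"
      by (simp add: Suc_diff_Suc[symmetric])
    show ?thesis
    proof (cases "a \<in> S")
      case True
      have "S - {a} \<subseteq> {Suc a..n}" "d \<in> S - {a}"
        using less.prems(2,3,5) S(1) \<open>t \<le> d\<close> by (auto intro: subset_atLeastAtMost_Suc_if_notin)
      then have "w (insert t {Suc a..<b}) (S - {a}) \<le> w {Suc a..b} (S - {a})"
        using measure_S' True \<open>t \<le> d\<close> \<open>finite S\<close> less.prems(1-4,6) \<open>a < b\<close>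
        by (intro less.hyps) auto
      then show ?thesis
        using exchange_last_strip_min True less.prems(1,3-6) \<open>a < b\<close> by blast
    next
      case False
      then have "S \<subseteq> {Suc a..n}"
        using less.prems(5) by (rule subset_atLeastAtMost_Suc_if_notin)
      then have "S' \<subseteq> {Suc a..<d}"
        using S by (auto simp: subset_iff)
      have IH_S': "w (insert t {Suc a..<b}) S' \<le> w {Suc a..b} S'"
        using measure_S' less.prems(1-4) \<open>a < b\<close> \<open>S' \<subseteq> {Suc a..<d}\<close> \<open>d \<le> n\<close> \<open>card S' = b - a\<close>
          \<open>s \<in> S'\<close> \<open>t \<le> s\<close> by (intro less.hyps) auto
      have IH_S: "w (insert t {Suc a..<Suc b}) S \<le> w {Suc a..Suc b} S"
      proof (cases "Suc b = t")
        case True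
        moreover have "insert (Suc b) {Suc a..<Suc b} = {Suc a..Suc b}"
          using \<open>a < b\<close> by auto
        ultimately show ?thesis
          by simp
      next
        case False
        then have "(Suc b - Suc a) * (n + 1) + (t - Suc b) < (b - a) * (n + 1) + (t - b)"
          using less.prems(3) by simp
        then show ?thesis
          using less.prems False \<open>a < b\<close> \<open>S \<subseteq> {Suc a..n}\<close> by (intro less.hyps) auto
      qed
      show ?thesis
        using exchange_last_four_point[OF less.prems(1) \<open>a < b\<close> less.prems(3) \<open>t < d\<close> \<open>d \<le> n\<close>
            \<open>S' \<subseteq> {Suc a..<d}\<close> \<open>card S' = b - a\<close> IH_S'] IH_S S(1)
        by (simp add: atLeastLessThanSuc_atLeastAtMost)
    qed
  qed
qed

end

theorem lemma6p5:
  fixes n :: nat and w :: "nat set \<Rightarrow> nat set \<Rightarrow> ereal"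
    and I S :: "nat set" and t :: nat
  assumes "good_w n w"
    and "submodular_on {1..n} (\<lambda>S. w {1..card S} S)"
    and "is_interval I" and "I \<noteq> {}" and "I \<subseteq> {1..n}"
    and "S \<subseteq> {1..n}" and "card S = card I"
    and "t \<in> {1..n}" and "t > Max I"
    and "preceq (insert t (I - {Max I})) S"
  shows "w I S \<ge> w (insert t (I - {Max I})) S"
proof -
  interpret submodular_weight n w
    using assms(1,2) by unfold_locales
  obtain a b where I: "I = {a..b}" and "a \<le> b"
    using assms(3,4) unfolding is_interval_def by fastforce
  then have "Max I = b"
    by (intro Max_eqI) auto
  then have L: "insert t (I - {Max I}) = insert t {a..<b}" and "1 \<le> a"
    using I assms(5) \<open>a \<le> b\<close> by auto
  have "finite S"
    using assms(6) finite_subset by blast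
  have lower: "\<forall>x\<in>insert t {a..<b}. a \<le> x"
    using assms(9) \<open>Max I = b\<close> \<open>a \<le> b\<close> by auto
  have "a \<le> s" if "s \<in> S" for s
    using assms(10)[unfolded L] \<open>finite S\<close> lower that by (rule preceq_lower_bound)
  then have "S \<subseteq> {a..n}"
    using assms(6) by fastforce
  moreover have "\<exists>s\<in>S. t \<le> s"
    using preceq_upper_witness[OF assms(10)[unfolded L]] by simp
  ultimately show ?thesis
    using exchange_last[of a b t S] \<open>1 \<le> a\<close> \<open>a \<le> b\<close> assms(7-9) \<open>Max I = b\<close> L I by simp
qed

end
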